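(* Assume Hypotheses 1, 2 and 3 (see context). For each $x\in\Gamma$, the set $T(x)$ is a linear subspace of $X$.
   Context: System $\dot x=F(x)$ with $F=(f,g)$, i.e. $\dot a=f(a,z)$, $\dot z=g(a,z)$, $(a,z)\in\mathbb{R}^n\times\mathbb{R}^m$, $X=\mathbb{R}^n\times\mathbb{R}^m$, flow $\Phi(t,x)$. Euclidean inner product, norm, operator norm. $\mathcal{L}(x_1,x_2)=\|a_2-a_1\|^2-\|z_2-z_1\|^2$, $\mathcal{C}(x)=\{x'\in X:\mathcal{L}(x',x)\ge0\}$, $\mathbf{0}$ the zero vector of $X$; $\Pi(a,z)=a$, $\Pi_\perp(a,z)=z$; $\mathbb{B}_d(x)=\{(a',z'):\|a'-a\|\le d,\|z'-z\|\le d\}$. $\Gamma\subseteq U$ positively invariant means $\Phi(t,x)$ is defined for all $t\ge0$ for $x\in\Gamma$ and $\Phi(t,\Gamma)\subseteq\Gamma$. Hypothesis 1: $U$ open and convex, and there is $d>0$ with $\mathcal{C}(x)\cap U\subset\mathbb{B}_d(x)$ for all $x\in U$. Hypothesis 2: $f,g$ are $C^1$ on $U$; there exist continuous $\alpha>0$, $\ell\ge0$ on $U$ and $c_1>0$ with, for all $x\in U$: $\langle a',D_af(x)a'\rangle\ge\alpha(x)\|a'\|^2$; $\langle z',D_zg(x)z'\rangle\le\ell(x)\|z'\|^2$; $\alpha(x)\ge\ell(x)+\|D_zf(x)\|+\|D_ag(x)\|+c_1$. Hypothesis 3: $\Gamma\subset U$ is positively invariant and $\Pi_\perp(\Gamma)=\Pi_\perp(U)$.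 For $x\in\Gamma$, $Q(t,x)$ ($t\ge0$) denotes the fundamental matrix solution of the variational equation $\dot{\mathbf{x}}=DF(\Phi(t,x))\mathbf{x}$ with $Q(0,x)=I$. For $x\in\Gamma$, $T(x):=\{\mathbf{x}\in X: \mathcal{L}(Q(t,x)\mathbf{x},\mathbf{0})\le0\text{ for all }t\ge0\}$. *)

theory Defs
  imports "HOL-Analysis.Analysis"
begin

text \<open>State space X = R^n x R^m, realised as the product type (real^'n) x (real^'m),
whose inner product and norm are the Euclidean ones.\<close>

definition Lfun :: "(real^'n) \<times> (real^'m) \<Rightarrow> (real^'n) \<times> (real^'m) \<Rightarrow> real" where
  "Lfun x1 x2 = (norm (fst x2 - fst x1))\<^sup>2 - (norm (snd x2 - snd x1))\<^sup>2"

definition Lcone :: "(real^'n) \<times> (real^'m) \<Rightarrow> ((real^'n) \<times> (real^'m)) set" where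
  "Lcone x = {x'. Lfun x' x \<ge> 0}"

definition boxB :: "real \<Rightarrow> (real^'n) \<times> (real^'m) \<Rightarrow> ((real^'n) \<times> (real^'m)) set" where
  "boxB d x = {(a', z'). norm (a' - fst x) \<le> d \<and> norm (z' - snd x) \<le> d}"

definition vfield ::
  "((real^'n) \<times> (real^'m) \<Rightarrow> real^'n) \<Rightarrow> ((real^'n) \<times> (real^'m) \<Rightarrow> real^'m)
   \<Rightarrow> (real^'n) \<times> (real^'m) \<Rightarrow> (real^'n) \<times> (real^'m)" where
  "vfield f g x = (f x, g x)"

definition DFmat ::
  "((real^'n) \<times> (real^'m) \<Rightarrow> (((real^'n) \<times> (real^'m)) \<Rightarrow>\<^sub>L (real^'n)))
   \<Rightarrow> ((real^'n) \<times> (real^'m) \<Rightarrow> (((real^'n) \<times> (real^'m)) \<Rightarrow>\<^sub>L (real^'m)))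
   \<Rightarrow> (real^'n) \<times> (real^'m) \<Rightarrow> (((real^'n) \<times> (real^'m)) \<Rightarrow>\<^sub>L ((real^'n) \<times> (real^'m)))" where
  "DFmat f' g' x = Blinfun (\<lambda>v. (blinfun_apply (f' x) v, blinfun_apply (g' x) v))"

definition Tset ::
  "(real \<Rightarrow> (real^'n) \<times> (real^'m) \<Rightarrow> (((real^'n) \<times> (real^'m)) \<Rightarrow>\<^sub>L ((real^'n) \<times> (real^'m))))
   \<Rightarrow> (real^'n) \<times> (real^'m) \<Rightarrow> ((real^'n) \<times> (real^'m)) set" where
  "Tset Q x = {v. \<forall>t\<ge>0. Lfun (blinfun_apply (Q t x) v) 0 \<le> 0}"

end

theory Submission
  imports Defs
begin

(* Fix x in Gamma and write u_v(t) = Q(t,x) v = (a(t), z(t)); u_v solves the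
   linear non-autonomous system  a' = F(t) u,  z' = G(t) u  with F(t) = Df(Phi(t,x)),
   G(t) = Dg(Phi(t,x)).  T(x) consists of the v whose solution stays in the closed cone
   |a| <= |z| for all t >= 0, so T(x) contains 0 and is closed under scaling; the point is
   closure under addition.  Hypothesis 2 gives, pointwise in t, the estimates
     outside the cone:  <a, F u> >= (l + C + c1) |a|^2,   inside the cone:  <z, G u> <= (l + C) |z|^2,
   (C the norm of D_a g).  Hence a solution that leaves the cone never returns, and then |a|^2
   grows at rate 2(l + C + c1) while |z_1|^2 + |z_2|^2 grows at most at rate 2(l + C) for two
   solutions staying in the cone.  If u_1 + u_2 left the cone, the quotient
   exp(2 c1 t) (|z_1|^2 + |z_2|^2) / |a_1 + a_2|^2 would be non-increasing yet bounded below by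
   exp(2 c1 t)/2, a contradiction. *)

section \<open>Real-analysis tools\<close>

lemma has_real_derivative_norm_squared:
  fixes a :: "real \<Rightarrow> 'a::real_inner"
  assumes "(a has_vector_derivative a') (at t)"
  shows "((\<lambda>s. (norm (a s))\<^sup>2) has_real_derivative 2 * inner (a t) a') (at t)"
proof -
  have "((\<lambda>s. inner (a s) (a s)) has_vector_derivative inner (a t) a' + inner a' (a t)) (at t)"
    using bounded_bilinear.has_vector_derivative[OF bounded_bilinear_inner assms assms] by simp
  then show ?thesis
    by (simp add: has_real_derivative_iff_has_vector_derivative power2_norm_eq_inner inner_commute)
qed

text \<open>A continuous function whose derivative is non-negative wherever the function is positive
  stays positive once it is positive: it cannot reach its first zero.\<close>
lemma positivity_persists:
  fixes h h' :: "real \<Rightarrow> real"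
  assumes cont: "continuous_on {t0..} h"
    and der: "\<And>s. s > t0 \<Longrightarrow> (h has_real_derivative h' s) (at s)"
    and nonneg: "\<And>s. s > t0 \<Longrightarrow> h s > 0 \<Longrightarrow> h' s \<ge> 0"
    and h0: "h t0 > 0" and tt: "t \<ge> t0"
  shows "h t > 0"
proof (rule ccontr)
  assume "\<not> h t > 0"
  define S where "S = {t0..t} \<inter> h -` {..0}"
  have closed: "closed S" unfolding S_def
    by (rule continuous_closed_preimage) (use cont in \<open>auto intro: continuous_on_subset\<close>)
  have nonempty: "S \<noteq> {}" using \<open>\<not> h t > 0\<close> tt unfolding S_def by auto
  have bdd: "bdd_below S" unfolding S_def by (meson IntD1 atLeastAtMost_iff bdd_below.I)
  define t1 where "t1 = Inf S"
  have "t1 \<in> S" using closed_contains_Inf[OF nonempty bdd closed] t1_def by simp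
  hence t1: "t0 \<le> t1" "h t1 \<le> 0" unfolding S_def by auto
  have before_t1: "h s > 0" if "t0 \<le> s" "s < t1" for s
  proof (rule ccontr)
    assume "\<not> h s > 0"
    hence "s \<in> S" using that \<open>t1 \<in> S\<close> unfolding S_def by auto
    hence "t1 \<le> s" unfolding t1_def using bdd by (simp add: cInf_lower)
    thus False using that by simp
  qed
  have "h t0 \<le> h t1"
  proof (rule DERIV_nonneg_imp_increasing_open[OF t1(1)])
    show "\<exists>y. (h has_real_derivative y) (at s) \<and> 0 \<le> y" if "t0 < s" "s < t1" for s
      using der[of s] nonneg[of s] before_t1[of s] that by auto
    show "continuous_on {t0..t1} h" using cont by (rule continuous_on_subset) auto
  qed
  thus False using t1 h0 by simp
qed

lemma weighted_ratio_antitone: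
  fixes p q p' q' k :: "real \<Rightarrow> real" and c :: real
  assumes "t0 \<le> t" and cont_p: "continuous_on {t0..t} p" and cont_q: "continuous_on {t0..t} q"
    and der_p: "\<And>s. t0 < s \<Longrightarrow> s < t \<Longrightarrow> (p has_real_derivative p' s) (at s)"
    and der_q: "\<And>s. t0 < s \<Longrightarrow> s < t \<Longrightarrow> (q has_real_derivative q' s) (at s)"
    and p_pos: "\<And>s. t0 \<le> s \<Longrightarrow> s \<le> t \<Longrightarrow> p s > 0"
    and q_nonneg: "\<And>s. q s \<ge> 0"
    and grow_p: "\<And>s. t0 < s \<Longrightarrow> s < t \<Longrightarrow> p' s \<ge> 2 * (k s + c) * p s"
    and grow_q: "\<And>s. t0 < s \<Longrightarrow> s < t \<Longrightarrow> q' s \<le> 2 * k s * q s"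
  shows "exp (2 * c * t) * q t / p t \<le> exp (2 * c * t0) * q t0 / p t0"
proof -
  define E where "E s = exp (2 * c * s)" for s
  define R where "R s = E s * q s / p s" for s
  have "R t \<le> R t0"
  proof (rule DERIV_nonpos_imp_decreasing_open[OF \<open>t0 \<le> t\<close>])
    show "continuous_on {t0..t} R" unfolding R_def E_def
      using p_pos by (intro continuous_intros cont_p cont_q) force
    show "\<exists>D. (R has_real_derivative D) (at s) \<and> D \<le> 0" if "t0 < s" "s < t" for s
    proof -
      have ps: "p s > 0" using p_pos that by simp
      have dE: "(E has_real_derivative E s * (2 * c)) (at s)" unfolding E_def
        by (auto intro!: derivative_eq_intros)
      have dR: "(R has_real_derivative
          E s * ((2 * c * q s + q' s) * p s - q s * p' s) / (p s * p s)) (at s)"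
        unfolding R_def[abs_def]
        using DERIV_divide[OF DERIV_mult[OF dE der_q[OF that]] der_p[OF that]] ps
        by (simp add: algebra_simps)
      have "q' s * p s \<le> (2 * k s * q s) * p s"
        using grow_q[OF that] ps by (intro mult_right_mono) auto
      moreover have "q s * (2 * (k s + c) * p s) \<le> q s * p' s"
        using grow_p[OF that] q_nonneg by (intro mult_left_mono) auto
      ultimately have "(2 * c * q s + q' s) * p s - q s * p' s \<le> 0"
        by (simp add: algebra_simps)
      hence "E s * ((2 * c * q s + q' s) * p s - q s * p' s) / (p s * p s) \<le> 0"
        unfolding E_def using ps by (simp add: mult_nonneg_nonpos divide_nonpos_pos)
      thus ?thesis using dR by blast
    qed
  qed
  thus ?thesis unfolding R_def E_def .
qed

lemma exp_exceeds_eventually: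
  fixes c R t0 :: real
  assumes "c > 0"
  obtains T where "T \<ge> t0" and "R < exp (2 * c * T) / 2"
proof
  define T where "T = max t0 (R / c)"
  show "T \<ge> t0" unfolding T_def by simp
  have "R \<le> c * T"
  proof -
    have "R / c \<le> T" unfolding T_def by simp
    then show ?thesis using assms by (simp add: pos_divide_le_eq mult.commute)
  qed
  also have "\<dots> < (1 + 2 * c * T) / 2" by simp
  also have "\<dots> \<le> exp (2 * c * T) / 2"
    using exp_ge_add_one_self[of "2 * c * T"] by (intro divide_right_mono) auto
  finally show "R < exp (2 * c * T) / 2" .
qed

lemma norm_add_squared_le:
  fixes x y :: "'a::real_normed_vector" and x' y' :: "'b::real_normed_vector"
  assumes "norm x \<le> norm x'" and "norm y \<le> norm y'"
  shows "(norm (x + y))\<^sup>2 \<le> 2 * ((norm x')\<^sup>2 + (norm y')\<^sup>2)"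
proof -
  have "norm (x + y) \<le> norm x' + norm y'"
    using norm_triangle_ineq[of x y] assms by linarith
  then have "(norm (x + y))\<^sup>2 \<le> (norm x' + norm y')\<^sup>2" by (simp add: power_mono)
  also have "\<dots> \<le> 2 * ((norm x')\<^sup>2 + (norm y')\<^sup>2)"
    by (smt (verit) power2_diff power2_sum zero_le_power2)
  finally show ?thesis .
qed

section \<open>Pointwise estimates for a split linear map\<close>

lemma inner_fst_lower_bound:
  fixes F :: "('a::real_inner \<times> 'b::real_normed_vector) \<Rightarrow>\<^sub>L 'a"
  assumes "\<And>a. inner a (F (a, 0)) \<ge> \<alpha> * (norm a)\<^sup>2"
  shows "inner (fst p) (F p) \<ge> \<alpha> * (norm (fst p))\<^sup>2
           - onorm (\<lambda>z. F (0, z)) * norm (fst p) * norm (snd p)"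
proof -
  have bl: "bounded_linear (\<lambda>z. F (0::'a, z))"
    by (intro bounded_linear_blinfun_apply bounded_linear_Pair bounded_linear_zero bounded_linear_ident)
  have "F p = F (fst p, 0) + F (0, snd p)"
  proof -
    have "p = (fst p, 0) + (0, snd p)" by simp
    then show ?thesis by (metis blinfun.add_right)
  qed
  hence split: "inner (fst p) (F p) = inner (fst p) (F (fst p, 0)) + inner (fst p) (F (0, snd p))"
    by (simp add: inner_add_right)
  have "- inner (fst p) (F (0, snd p)) \<le> norm (fst p) * norm (F (0, snd p))"
    using norm_cauchy_schwarz[of "- fst p" "F (0, snd p)"] by simp
  also have "\<dots> \<le> norm (fst p) * (onorm (\<lambda>z. F (0, z)) * norm (snd p))"
    by (rule mult_left_mono[OF onorm[OF bl]]) simp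
  finally show ?thesis using split assms[of "fst p"] by (simp add: algebra_simps)
qed

lemma inner_snd_upper_bound:
  fixes G :: "('a::real_normed_vector \<times> 'b::real_inner) \<Rightarrow>\<^sub>L 'b"
  assumes "\<And>z. inner z (G (0, z)) \<le> l * (norm z)\<^sup>2"
  shows "inner (snd p) (G p) \<le> l * (norm (snd p))\<^sup>2
           + onorm (\<lambda>a. G (a, 0)) * norm (fst p) * norm (snd p)"
proof -
  have bl: "bounded_linear (\<lambda>a. G (a, 0::'b))"
    by (intro bounded_linear_blinfun_apply bounded_linear_Pair bounded_linear_zero bounded_linear_ident)
  have "G p = G (fst p, 0) + G (0, snd p)"
  proof -
    have "p = (fst p, 0) + (0, snd p)" by simp
    then show ?thesis by (metis blinfun.add_right)
  qed
  hence split: "inner (snd p) (G p) = inner (snd p) (G (fst p, 0)) + inner (snd p) (G (0, snd p))"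
    by (simp add: inner_add_right)
  have "inner (snd p) (G (fst p, 0)) \<le> norm (snd p) * norm (G (fst p, 0))"
    using norm_cauchy_schwarz by blast
  also have "\<dots> \<le> norm (snd p) * (onorm (\<lambda>a. G (a, 0)) * norm (fst p))"
    by (rule mult_left_mono[OF onorm[OF bl]]) simp
  finally show ?thesis using split assms[of "snd p"] by (simp add: algebra_simps)
qed

lemma off_diagonal_norms_nonneg:
  fixes F :: "('a::real_normed_vector \<times> 'b::real_normed_vector) \<Rightarrow>\<^sub>L 'a"
    and G :: "('a \<times> 'b) \<Rightarrow>\<^sub>L 'b"
  shows "onorm (\<lambda>z. F (0, z)) \<ge> 0" and "onorm (\<lambda>a. G (a, 0)) \<ge> 0"
  by (intro onorm_pos_le bounded_linear_blinfun_apply bounded_linear_Pair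
      bounded_linear_zero bounded_linear_ident)+

text \<open>Consequences of Hypothesis 2 for one split linear map (F, G) : A x B -> A x B, stated in
  terms of the off-diagonal norm C of G: the A-part expands strictly faster outside the cone
  |a| <= |z| than the B-part can grow inside it.\<close>
context
  fixes F :: "('a::real_inner \<times> 'b::real_inner) \<Rightarrow>\<^sub>L 'a" and G :: "('a \<times> 'b) \<Rightarrow>\<^sub>L 'b"
    and \<alpha> l c :: real
  assumes coercive: "\<And>a. inner a (F (a, 0)) \<ge> \<alpha> * (norm a)\<^sup>2"
    and dissipative: "\<And>z. inner z (G (0, z)) \<le> l * (norm z)\<^sup>2"
    and gap: "\<alpha> \<ge> l + onorm (\<lambda>z. F (0, z)) + onorm (\<lambda>a. G (a, 0)) + c"
begin

lemmas off_diagonal_nonneg =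
  off_diagonal_norms_nonneg(1)[where F = F] off_diagonal_norms_nonneg(2)[where G = G]

lemma expansion_outside_cone:
  assumes "norm (snd p) \<le> norm (fst p)"
  shows "inner (fst p) (F p) \<ge> (l + onorm (\<lambda>a. G (a, 0)) + c) * (norm (fst p))\<^sup>2"
proof -
  have "onorm (\<lambda>z. F (0, z)) * norm (fst p) * norm (snd p)
      \<le> onorm (\<lambda>z. F (0, z)) * (norm (fst p))\<^sup>2"
    using assms off_diagonal_nonneg
    by (simp add: power2_eq_square mult.assoc mult_left_mono)
  moreover have "(\<alpha> - onorm (\<lambda>z. F (0, z))) * (norm (fst p))\<^sup>2
      \<ge> (l + onorm (\<lambda>a. G (a, 0)) + c) * (norm (fst p))\<^sup>2"
    using gap by (intro mult_right_mono) auto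
  ultimately show ?thesis
    using inner_fst_lower_bound[OF coercive, of p] by (simp add: algebra_simps)
qed

lemma growth_inside_cone:
  assumes "norm (fst p) \<le> norm (snd p)"
  shows "inner (snd p) (G p) \<le> (l + onorm (\<lambda>a. G (a, 0))) * (norm (snd p))\<^sup>2"
proof -
  have "onorm (\<lambda>a. G (a, 0)) * norm (fst p) * norm (snd p)
      \<le> onorm (\<lambda>a. G (a, 0)) * (norm (snd p))\<^sup>2"
    using assms off_diagonal_nonneg
    by (simp add: power2_eq_square mult.assoc mult_left_mono mult_right_mono)
  then show ?thesis
    using inner_snd_upper_bound[OF dissipative, of p] by (simp add: algebra_simps)
qed

text \<open>Outside the cone the B-component grows at most like l + C times the A-norm squared,
  hence slower than the A-component: the quantity |a|^2 - |z|^2 increases there.\<close>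
lemma expansion_dominates_outside_cone:
  assumes "norm (snd p) \<le> norm (fst p)" and "l \<ge> 0"
  shows "inner (fst p) (F p) - inner (snd p) (G p) \<ge> c * (norm (fst p))\<^sup>2"
proof -
  have "onorm (\<lambda>a. G (a, 0)) * norm (fst p) * norm (snd p)
      \<le> onorm (\<lambda>a. G (a, 0)) * (norm (fst p))\<^sup>2"
    using assms off_diagonal_nonneg
    by (simp add: power2_eq_square mult.assoc mult_left_mono)
  moreover have "l * (norm (snd p))\<^sup>2 \<le> l * (norm (fst p))\<^sup>2"
    using assms by (simp add: mult_left_mono power_mono)
  ultimately show ?thesis
    using inner_snd_upper_bound[OF dissipative, of p] expansion_outside_cone[OF assms(1)]
    by (simp add: algebra_simps)
qed

end

section \<open>The cone argument for split linear systems\<close>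

definition split_solution ::
  "(real \<Rightarrow> ('a::real_normed_vector \<times> 'b::real_normed_vector) \<Rightarrow>\<^sub>L 'a)
   \<Rightarrow> (real \<Rightarrow> ('a \<times> 'b) \<Rightarrow>\<^sub>L 'b) \<Rightarrow> (real \<Rightarrow> 'a \<times> 'b) \<Rightarrow> bool" where
  "split_solution F G u \<longleftrightarrow> continuous_on {0..} u \<and>
     (\<forall>t>0. (u has_vector_derivative (F t (u t), G t (u t))) (at t))"

definition z_dominant :: "('a::real_normed_vector \<times> 'b::real_normed_vector) \<Rightarrow> bool" where
  "z_dominant p \<longleftrightarrow> norm (fst p) \<le> norm (snd p)"

lemma z_dominant_iff_Lfun: "z_dominant p \<longleftrightarrow> Lfun p 0 \<le> 0"
  unfolding z_dominant_def Lfun_def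
  by (simp add: abs_le_square_iff[of "norm (fst p)" "norm (snd p)", simplified])

lemma split_solution_add:
  assumes "split_solution F G u1" and "split_solution F G u2"
  shows "split_solution F G (\<lambda>t. u1 t + u2 t)"
  using assms unfolding split_solution_def
  by (auto intro!: continuous_intros derivative_eq_intros simp: blinfun.add_right)

lemma split_solution_norm_squared_derivatives:
  assumes "split_solution F G u" and "t > 0"
  shows "((\<lambda>s. (norm (fst (u s)))\<^sup>2) has_real_derivative 2 * inner (fst (u t)) (F t (u t))) (at t)"
    and "((\<lambda>s. (norm (snd (u s)))\<^sup>2) has_real_derivative 2 * inner (snd (u t)) (G t (u t))) (at t)"
proof -
  have u': "(u has_vector_derivative (F t (u t), G t (u t))) (at t)"
    using assms unfolding split_solution_def by blast
  show "((\<lambda>s. (norm (fst (u s)))\<^sup>2) has_real_derivative 2 * inner (fst (u t)) (F t (u t))) (at t)"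
    using has_real_derivative_norm_squared[OF
        bounded_linear.has_vector_derivative[OF bounded_linear_fst u']] by simp
  show "((\<lambda>s. (norm (snd (u s)))\<^sup>2) has_real_derivative 2 * inner (snd (u t)) (G t (u t))) (at t)"
    using has_real_derivative_norm_squared[OF
        bounded_linear.has_vector_derivative[OF bounded_linear_snd u']] by simp
qed

text \<open>Hypothesis 2 along a trajectory: the data of a split linear system satisfying the cone
  estimates uniformly in t >= 0.\<close>
locale split_linear_system =
  fixes F :: "real \<Rightarrow> ('a::real_inner \<times> 'b::real_inner) \<Rightarrow>\<^sub>L 'a"
    and G :: "real \<Rightarrow> ('a \<times> 'b) \<Rightarrow>\<^sub>L 'b"
    and \<alpha> l :: "real \<Rightarrow> real" and c :: real
  assumes c_pos: "c > 0"
    and l_nonneg: "\<And>t. t \<ge> 0 \<Longrightarrow> l t \<ge> 0"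
    and coercive: "\<And>t a. t \<ge> 0 \<Longrightarrow> inner a (F t (a, 0)) \<ge> \<alpha> t * (norm a)\<^sup>2"
    and dissipative: "\<And>t z. t \<ge> 0 \<Longrightarrow> inner z (G t (0, z)) \<le> l t * (norm z)\<^sup>2"
    and gap: "\<And>t. t \<ge> 0 \<Longrightarrow> \<alpha> t \<ge> l t + onorm (\<lambda>z. F t (0, z)) + onorm (\<lambda>a. G t (a, 0)) + c"
begin

lemma cone_exit_permanent:
  assumes u: "split_solution F G u" and "t0 \<ge> 0" and exit: "norm (snd (u t0)) < norm (fst (u t0))"
    and "t \<ge> t0"
  shows "norm (snd (u t)) < norm (fst (u t))"
proof -
  define h where "h s = (norm (fst (u s)))\<^sup>2 - (norm (snd (u s)))\<^sup>2" for s
  have "h t > 0"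
  proof (rule positivity_persists[OF _ _ _ _ \<open>t \<ge> t0\<close>])
    show "continuous_on {t0..} h" unfolding h_def
      using u \<open>t0 \<ge> 0\<close> unfolding split_solution_def
      by (intro continuous_intros) (auto intro: continuous_on_subset)
    show "(h has_real_derivative
        2 * inner (fst (u s)) (F s (u s)) - 2 * inner (snd (u s)) (G s (u s))) (at s)"
      if "s > t0" for s
      unfolding h_def using split_solution_norm_squared_derivatives[OF u, of s] that \<open>t0 \<ge> 0\<close>
      by (auto intro: DERIV_diff)
    show "2 * inner (fst (u s)) (F s (u s)) - 2 * inner (snd (u s)) (G s (u s)) \<ge> 0"
      if "s > t0" "h s > 0" for s
    proof -
      have "norm (snd (u s)) \<le> norm (fst (u s))"
        using \<open>h s > 0\<close> unfolding h_def by (smt (verit) norm_ge_zero power_mono)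
      then have "inner (fst (u s)) (F s (u s)) - inner (snd (u s)) (G s (u s))
          \<ge> c * (norm (fst (u s)))\<^sup>2"
        using expansion_dominates_outside_cone[OF coercive dissipative gap] l_nonneg that \<open>t0 \<ge> 0\<close>
        by auto
      then show ?thesis using c_pos by (smt (verit) zero_le_power2 mult_nonneg_nonneg)
    qed
    show "h t0 > 0" using exit unfolding h_def by (simp add: power_strict_mono)
  qed
  then show ?thesis unfolding h_def by (smt (verit) norm_ge_zero power_mono)
qed

text \<open>Otherwise, after the
  exit time t0 the quotient exp(2ct) (|z_1|^2 + |z_2|^2) / |a_1 + a_2|^2 is non-increasing, while
  it is at least exp(2ct)/2 because |a_1 + a_2|^2 <= 2 (|z_1|^2 + |z_2|^2).\<close>
lemma sum_stays_z_dominant: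
  assumes u1: "split_solution F G u1" and u2: "split_solution F G u2"
    and cone1: "\<And>t. t \<ge> 0 \<Longrightarrow> z_dominant (u1 t)"
    and cone2: "\<And>t. t \<ge> 0 \<Longrightarrow> z_dominant (u2 t)"
    and "t0 \<ge> 0"
  shows "z_dominant (u1 t0 + u2 t0)"
proof (rule ccontr)
  define w where "w t = u1 t + u2 t" for t
  have w: "split_solution F G w" unfolding w_def by (rule split_solution_add[OF u1 u2])
  assume "\<not> z_dominant (u1 t0 + u2 t0)"
  then have outside: "norm (snd (w t)) < norm (fst (w t))" if "t \<ge> t0" for t
    using cone_exit_permanent[OF w \<open>t0 \<ge> 0\<close> _ that] unfolding w_def z_dominant_def by simp
  define p where "p t = (norm (fst (w t)))\<^sup>2" for t
  define q where "q t = (norm (snd (u1 t)))\<^sup>2 + (norm (snd (u2 t)))\<^sup>2" for t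
  define k where "k t = l t + onorm (\<lambda>a. G t (a, 0))" for t
  have p_pos: "p t > 0" if "t \<ge> t0" for t
    using outside[OF that] unfolding p_def by (smt (verit) norm_ge_zero zero_less_power)
  have p_le_q: "p t \<le> 2 * q t" if "t \<ge> 0" for t
    using norm_add_squared_le[of "fst (u1 t)" "snd (u1 t)" "fst (u2 t)" "snd (u2 t)"]
      cone1[OF that] cone2[OF that] unfolding p_def q_def w_def z_dominant_def by simp
  define R0 where "R0 = exp (2 * c * t0) * q t0 / p t0"
  have ratio_bound: "exp (2 * c * t) * q t / p t \<le> R0" if "t \<ge> t0" for t
    unfolding R0_def
  proof (rule weighted_ratio_antitone[OF that, where k = k])
    have cont: "continuous_on {t0..t} u" if "split_solution F G u" for u
      using that \<open>t0 \<ge> 0\<close> unfolding split_solution_def by (auto intro: continuous_on_subset)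
    show "continuous_on {t0..t} p" "continuous_on {t0..t} q" unfolding p_def q_def
      by (intro continuous_intros cont u1 u2 w)+
    show "(p has_real_derivative 2 * inner (fst (w s)) (F s (w s))) (at s)" if "t0 < s" for s
      unfolding p_def using split_solution_norm_squared_derivatives(1)[OF w] that \<open>t0 \<ge> 0\<close> by simp
    show "(q has_real_derivative 2 * inner (snd (u1 s)) (G s (u1 s))
        + 2 * inner (snd (u2 s)) (G s (u2 s))) (at s)" if "t0 < s" for s
      unfolding q_def using split_solution_norm_squared_derivatives(2)[OF u1, of s]
        split_solution_norm_squared_derivatives(2)[OF u2, of s] that \<open>t0 \<ge> 0\<close>
      by (auto intro: DERIV_add)
    show "p s > 0" if "t0 \<le> s" for s using p_pos that by simp
    show "q s \<ge> 0" for s unfolding q_def by simp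
    show "2 * inner (fst (w s)) (F s (w s)) \<ge> 2 * (k s + c) * p s" if "t0 < s" for s
      using expansion_outside_cone[OF coercive dissipative gap, of s "w s"] outside[of s] that
        \<open>t0 \<ge> 0\<close> unfolding p_def k_def by (simp add: algebra_simps)
    show "2 * inner (snd (u1 s)) (G s (u1 s)) + 2 * inner (snd (u2 s)) (G s (u2 s))
        \<le> 2 * k s * q s" if "t0 < s" for s
      using growth_inside_cone[OF coercive dissipative gap, of s "u1 s"]
        growth_inside_cone[OF coercive dissipative gap, of s "u2 s"]
        cone1[of s] cone2[of s] that \<open>t0 \<ge> 0\<close> unfolding q_def k_def z_dominant_def
      by (simp add: algebra_simps)
  qed
  obtain T where "T \<ge> t0" and "R0 < exp (2 * c * T) / 2"
    using exp_exceeds_eventually[OF c_pos] .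
  moreover have "exp (2 * c * T) / 2 \<le> exp (2 * c * T) * q T / p T"
    using p_pos[OF \<open>T \<ge> t0\<close>] p_le_q[of T] \<open>T \<ge> t0\<close> \<open>t0 \<ge> 0\<close> by (simp add: field_simps)
  ultimately show False using ratio_bound[OF \<open>T \<ge> t0\<close>] by linarith
qed

end

section \<open>The variational equation\<close>

lemma DFmat_apply: "DFmat f' g' p v = (f' p v, g' p v)"
proof -
  have "bounded_linear (\<lambda>v. (f' p v, g' p v))"
    by (intro bounded_linear_Pair blinfun.bounded_linear_right)
  then show ?thesis unfolding DFmat_def by (simp add: bounded_linear_Blinfun_apply)
qed

lemma variational_split_solution:
  fixes Q :: "real \<Rightarrow> ((real^'n) \<times> (real^'m)) \<Rightarrow>\<^sub>L ((real^'n) \<times> (real^'m))"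
  assumes Q': "\<And>t. t \<ge> 0 \<Longrightarrow> (Q has_vector_derivative (DFmat f' g' (y t) o\<^sub>L Q t)) (at t within {0..})"
  shows "split_solution (\<lambda>t. f' (y t)) (\<lambda>t. g' (y t)) (\<lambda>t. Q t v)"
proof -
  have deriv_within: "((\<lambda>t. Q t v) has_vector_derivative (f' (y t) (Q t v), g' (y t) (Q t v)))
      (at t within {0..})" if "t \<ge> 0" for t
    using bounded_linear.has_vector_derivative[OF bounded_linear_apply_blinfun Q'[OF that]]
    by (simp add: DFmat_apply)
  have "continuous_on {0..} (\<lambda>t. Q t v)"
    unfolding continuous_on_eq_continuous_within
    using deriv_within has_vector_derivative_continuous by fastforce
  moreover have "((\<lambda>t. Q t v) has_vector_derivative (f' (y t) (Q t v), g' (y t) (Q t v))) (at t)"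
    if "t > 0" for t
  proof -
    have "((\<lambda>t. Q t v) has_vector_derivative (f' (y t) (Q t v), g' (y t) (Q t v)))
        (at t within {0<..})"
      using deriv_within[of t] that by (rule_tac has_vector_derivative_within_subset) auto
    then show ?thesis using at_within_open[of t "{0<..}"] that by simp
  qed
  ultimately show ?thesis unfolding split_solution_def by blast
qed

theorem lemma2p7:
  fixes f :: "(real^'n) \<times> (real^'m) \<Rightarrow> real^'n"
    and g :: "(real^'n) \<times> (real^'m) \<Rightarrow> real^'m"
    and f' :: "(real^'n) \<times> (real^'m) \<Rightarrow> (((real^'n) \<times> (real^'m)) \<Rightarrow>\<^sub>L (real^'n))"
    and g' :: "(real^'n) \<times> (real^'m) \<Rightarrow> (((real^'n) \<times> (real^'m)) \<Rightarrow>\<^sub>L (real^'m))"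
    and U \<Gamma> :: "((real^'n) \<times> (real^'m)) set"
    and d c1 :: real
    and \<alpha> ell :: "(real^'n) \<times> (real^'m) \<Rightarrow> real"
    and \<Phi> :: "real \<Rightarrow> (real^'n) \<times> (real^'m) \<Rightarrow> (real^'n) \<times> (real^'m)"
    and Q :: "real \<Rightarrow> (real^'n) \<times> (real^'m) \<Rightarrow> (((real^'n) \<times> (real^'m)) \<Rightarrow>\<^sub>L ((real^'n) \<times> (real^'m)))"
    and x :: "(real^'n) \<times> (real^'m)"
  assumes H1_open: "open U" and H1_convex: "convex U"
    and H1_d: "d > 0" and H1_cone: "\<forall>y\<in>U. Lcone y \<inter> U \<subseteq> boxB d y"
    and H2_f_deriv: "\<forall>y\<in>U. (f has_derivative blinfun_apply (f' y)) (at y)"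
    and H2_g_deriv: "\<forall>y\<in>U. (g has_derivative blinfun_apply (g' y)) (at y)"
    and H2_f_C1: "continuous_on U f'" and H2_g_C1: "continuous_on U g'"
    and H2_alpha_cont: "continuous_on U \<alpha>" and H2_ell_cont: "continuous_on U ell"
    and H2_alpha_pos: "\<forall>y\<in>U. \<alpha> y > 0" and H2_ell_nonneg: "\<forall>y\<in>U. ell y \<ge> 0"
    and H2_c1: "c1 > 0"
    and H2_Daf: "\<forall>y\<in>U. \<forall>a'. inner a' (blinfun_apply (f' y) (a', 0)) \<ge> \<alpha> y * (norm a')\<^sup>2"
    and H2_Dzg: "\<forall>y\<in>U. \<forall>z'. inner z' (blinfun_apply (g' y) (0, z')) \<le> ell y * (norm z')\<^sup>2"
    and H2_gap: "\<forall>y\<in>U. \<alpha> y \<ge> ell y + onorm (\<lambda>z'. blinfun_apply (f' y) (0, z'))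
                                   + onorm (\<lambda>a'. blinfun_apply (g' y) (a', 0)) + c1"
    and H3_sub: "\<Gamma> \<subseteq> U"
    and H3_flow: "\<forall>y\<in>\<Gamma>. \<Phi> 0 y = y \<and> (\<forall>t\<ge>0. \<Phi> t y \<in> \<Gamma> \<and>
        ((\<lambda>s. \<Phi> s y) has_vector_derivative vfield f g (\<Phi> t y)) (at t within {0..}))"
    and H3_proj: "snd ` \<Gamma> = snd ` U"
    and Q_fund: "\<forall>y\<in>\<Gamma>. Q 0 y = id_blinfun \<and> (\<forall>t\<ge>0.
        ((\<lambda>s. Q s y) has_vector_derivative (DFmat f' g' (\<Phi> t y) o\<^sub>L Q t y)) (at t within {0..}))"
    and x_in: "x \<in> \<Gamma>"
  shows "subspace (Tset Q x)"
proof -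
  define y where "y t = \<Phi> t x" for t
  have y_in_U: "y t \<in> U" if "t \<ge> 0" for t
    using H3_flow x_in that H3_sub unfolding y_def by blast
  interpret split_linear_system "\<lambda>t. f' (y t)" "\<lambda>t. g' (y t)" "\<lambda>t. \<alpha> (y t)" "\<lambda>t. ell (y t)" c1
    by unfold_locales (use H2_c1 H2_ell_nonneg H2_Daf H2_Dzg H2_gap y_in_U in auto)
  define u where "u v t = Q t x v" for v t
  have solution: "split_solution (\<lambda>t. f' (y t)) (\<lambda>t. g' (y t)) (u v)" for v
    unfolding u_def y_def by (rule variational_split_solution) (use Q_fund x_in in auto)
  have T_iff: "v \<in> Tset Q x \<longleftrightarrow> (\<forall>t\<ge>0. z_dominant (u v t))" for v
    unfolding Tset_def u_def z_dominant_iff_Lfun by simp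
  show ?thesis unfolding subspace_def
  proof (intro conjI ballI allI)
    show "0 \<in> Tset Q x" unfolding T_iff u_def z_dominant_def by simp
    show "r *\<^sub>R v \<in> Tset Q x" if "v \<in> Tset Q x" for r v
      using that unfolding T_iff u_def z_dominant_def
      by (auto simp: blinfun.scaleR_right mult_left_mono)
    show "v1 + v2 \<in> Tset Q x" if "v1 \<in> Tset Q x" "v2 \<in> Tset Q x" for v1 v2
      using sum_stays_z_dominant[OF solution solution, of v1 v2] that
      unfolding T_iff u_def by (simp add: blinfun.add_right)
  qed
qed

end
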